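(* For $i=1,2$ let $\mathcal{D}_i=(\Omega_i,\mathcal{B}_i)$ be a supersimple $2$-$(n_i,4,\lambda_i)$ design satisfying property $(\triangle)$, such that $(\Omega_i,\mathcal{C}_i)$ is a regular two-graph where $\mathcal{C}_i$ is the set of collinear triples of $\mathcal{D}_i$, and $n_i>2\lambda_i+2$. Let $\infty_i\in\Omega_i$. If the derived graphs $\mathcal{G}_{\mathcal{D}_1,\infty_1}$ and $\mathcal{G}_{\mathcal{D}_2,\infty_2}$ are isomorphic as graphs, then $\mathcal{D}_1$ and $\mathcal{D}_2$ are isomorphic as designs.
   Context: A $2$-$(n,4,\lambda)$ design $(\Omega,\mathcal{B})$: $n$ points, a multiset of $4$-subsets (lines), every $2$-subset in exactly $\lambda$ lines; supersimple: distinct lines meet in at most two points. Property $(\triangle)$: if $B_1,B_2\in\mathcal{B}$ with $|B_1\cap B_2|=2$ then $B_1\triangle B_2\in\mathcal{B}$. Collinear triple: $3$-subset contained in a line. Regular two-graph: $(\Omega,\mathcal{C})$ is a $2$-$(n,3,\mu)$ design with every $4$-subset containing $0,2$ or $4$ members of $\mathcal{C}$. The derived graph $\mathcal{G}_{\mathcal{D},\infty}$ has vertex set $\Omega\setminus\{\infty\}$, with $a,b$ adjacent iff $\{\infty,a,b\}\in\mathcal{C}$. Two designs are isomorphic if there is a bijection between point sets mapping the lines of one onto the lines of the other. *)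

theory Defs
  imports Main "HOL-Library.Multiset"
begin

definition design_2_4 :: "'a set \<Rightarrow> 'a set multiset \<Rightarrow> nat \<Rightarrow> nat \<Rightarrow> bool" where
  "design_2_4 \<Omega> \<B> n lam \<longleftrightarrow>
     finite \<Omega> \<and> card \<Omega> = n \<and>
     (\<forall>B \<in># \<B>. B \<subseteq> \<Omega> \<and> card B = 4) \<and>
     (\<forall>P. P \<subseteq> \<Omega> \<longrightarrow> card P = 2 \<longrightarrow> size (filter_mset (\<lambda>B. P \<subseteq> B) \<B>) = lam)"

definition supersimple :: "'a set multiset \<Rightarrow> bool" where
  "supersimple \<B> \<longleftrightarrow>
     (\<forall>B \<in># \<B>. count \<B> B = 1) \<and>
     (\<forall>B1 \<in># \<B>. \<forall>B2 \<in># \<B>. B1 \<noteq> B2 \<longrightarrow> card (B1 \<inter> B2) \<le> 2)"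

definition prop_triangle :: "'a set multiset \<Rightarrow> bool" where
  "prop_triangle \<B> \<longleftrightarrow>
     (\<forall>B1 \<in># \<B>. \<forall>B2 \<in># \<B>. card (B1 \<inter> B2) = 2 \<longrightarrow> (B1 - B2) \<union> (B2 - B1) \<in># \<B>)"

definition collinear_triples :: "'a set \<Rightarrow> 'a set multiset \<Rightarrow> 'a set set" where
  "collinear_triples \<Omega> \<B> = {T. T \<subseteq> \<Omega> \<and> card T = 3 \<and> (\<exists>B \<in># \<B>. T \<subseteq> B)}"

definition regular_two_graph :: "'a set \<Rightarrow> 'a set set \<Rightarrow> bool" where
  "regular_two_graph \<Omega> \<C> \<longleftrightarrow>
     finite \<Omega> \<and> (\<forall>T \<in> \<C>. T \<subseteq> \<Omega> \<and> card T = 3) \<and>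
     (\<exists>mu::nat. \<forall>P. P \<subseteq> \<Omega> \<longrightarrow> card P = 2 \<longrightarrow> card {T \<in> \<C>. P \<subseteq> T} = mu) \<and>
     (\<forall>Q. Q \<subseteq> \<Omega> \<longrightarrow> card Q = 4 \<longrightarrow> card {T \<in> \<C>. T \<subseteq> Q} \<in> {0, 2, 4})"

definition derived_adj :: "'a set \<Rightarrow> 'a set multiset \<Rightarrow> 'a \<Rightarrow> 'a \<Rightarrow> 'a \<Rightarrow> bool" where
  "derived_adj \<Omega> \<B> x a b \<longleftrightarrow> {x, a, b} \<in> collinear_triples \<Omega> \<B>"

definition graph_iso ::
  "'a set \<Rightarrow> ('a \<Rightarrow> 'a \<Rightarrow> bool) \<Rightarrow> 'b set \<Rightarrow> ('b \<Rightarrow> 'b \<Rightarrow> bool) \<Rightarrow> bool" where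
  "graph_iso V1 E1 V2 E2 \<longleftrightarrow>
     (\<exists>g. bij_betw g V1 V2 \<and> (\<forall>a \<in> V1. \<forall>b \<in> V1. E1 a b \<longleftrightarrow> E2 (g a) (g b)))"

definition derived_graphs_iso ::
  "'a set \<Rightarrow> 'a set multiset \<Rightarrow> 'a \<Rightarrow> 'b set \<Rightarrow> 'b set multiset \<Rightarrow> 'b \<Rightarrow> bool" where
  "derived_graphs_iso \<Omega>1 \<B>1 i1 \<Omega>2 \<B>2 i2 \<longleftrightarrow>
     graph_iso (\<Omega>1 - {i1}) (derived_adj \<Omega>1 \<B>1 i1) (\<Omega>2 - {i2}) (derived_adj \<Omega>2 \<B>2 i2)"

definition designs_iso :: "'a set \<Rightarrow> 'a set multiset \<Rightarrow> 'b set \<Rightarrow> 'b set multiset \<Rightarrow> bool" where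
  "designs_iso \<Omega>1 \<B>1 \<Omega>2 \<B>2 \<longleftrightarrow>
     (\<exists>f. bij_betw f \<Omega>1 \<Omega>2 \<and> image_mset (image f) \<B>1 = \<B>2)"

end

theory Submission
  imports Defs
begin

(* Fix \<infinity> and write a ~ b for adjacency in the derived graph at \<infinity>. For a line {\<infinity>, a, b, c},
   property (\<triangle>) and the even number of collinear triples in every 4-set show that c is
   adjacent to a and b, and that any other vertex w is adjacent to c iff it is adjacent to both or
   to neither of a, b. Such a vertex is unique: two of them would be adjacent twins, and then the
   fourth point t of the line through \<infinity> and the twins would be collinear with \<infinity> and every other
   point, although the \<lambda> lines through \<infinity> and t cover only 2\<lambda> < n - 2 further points. So the lines
   through \<infinity> can be read off the derived graph, and a graph isomorphism extended by \<infinity>1 \<mapsto> \<infinity>2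
   maps them to lines. A line L missing \<infinity> contains an edge xy; for the line M through \<infinity>, x, y,
   the symmetric difference N of L and M is a line through \<infinity> meeting M in two points, and L is
   the symmetric difference of M and N, so L is mapped to a line as well. Supersimplicity turns
   the multisets of lines into sets. *)

lemma card_3_subset_of_4:
  assumes T: "T \<subseteq> {p, q, r, s}" "card T = 3" and d: "distinct [p, q, r, s]"
  shows "T \<in> {{p, q, r}, {p, q, s}, {p, r, s}, {q, r, s}}"
proof -
  have "card {p, q, r, s} = 4" using d by simp
  hence "T \<noteq> {p, q, r, s}" using T(2) by auto
  then obtain x where x: "x \<in> {p, q, r, s}" "x \<notin> T" using T(1) by blast
  have "card ({p, q, r, s} - {x}) = 3" using x d by (auto simp: card_insert_if)
  hence "T = {p, q, r, s} - {x}"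
    using T x by (intro card_subset_eq) auto
  thus ?thesis using x d by auto
qed

lemma distinct_3_subsets_of_4:
  "distinct [p, q, r, s] \<Longrightarrow> distinct [{p, q, r}, {p, q, s}, {p, r, s}, {q, r, s}]"
  by (simp; intro conjI notI; drule equalityD1; auto)

lemma card_filter_4:
  assumes "distinct [A, B, C, D]"
  shows "card {T \<in> {A, B, C, D}. P T} = of_bool (P A) + of_bool (P B) + of_bool (P C) + of_bool (P D)"
proof -
  have "card {T \<in> {A, B, C, D}. P T} = card ({A, B, C, D} \<inter> Collect P)"
    by (rule arg_cong[where f = card]) blast
  also have "\<dots> = (\<Sum>T \<in> {A, B, C, D}. of_bool (P T))"
    by simp
  also have "\<dots> = of_bool (P A) + of_bool (P B) + of_bool (P C) + of_bool (P D)"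
    using assms by (simp add: add.assoc)
  finally show ?thesis .
qed

lemma even_count_4_parity:
  "of_bool a + of_bool b + of_bool c + of_bool d \<in> {0, 2, 4 :: nat} \<Longrightarrow> ((a \<longleftrightarrow> b) \<longleftrightarrow> (c \<longleftrightarrow> d))"
  by (cases a; cases b; cases c; cases d) auto

lemma regular_two_graph_parity:
  assumes rtg: "regular_two_graph \<Omega> \<C>" and Q: "{p, q, r, s} \<subseteq> \<Omega>" "distinct [p, q, r, s]"
  shows "({p, q, r} \<in> \<C> \<longleftrightarrow> {p, q, s} \<in> \<C>) \<longleftrightarrow> ({p, r, s} \<in> \<C> \<longleftrightarrow> {q, r, s} \<in> \<C>)"
proof -
  let ?X = "{{p, q, r}, {p, q, s}, {p, r, s}, {q, r, s}}"
  have "card {p, q, r, s} = 4" using Q(2) by simp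
  hence even: "card {T \<in> \<C>. T \<subseteq> {p, q, r, s}} \<in> {0, 2, 4}"
    using rtg Q(1) unfolding regular_two_graph_def by blast
  have "{T \<in> \<C>. T \<subseteq> {p, q, r, s}} = {T \<in> ?X. T \<in> \<C>}"
  proof (intro set_eqI iffI)
    fix T assume "T \<in> {T \<in> \<C>. T \<subseteq> {p, q, r, s}}"
    hence T: "T \<in> \<C>" "T \<subseteq> {p, q, r, s}" by simp_all
    have "card T = 3" using rtg T(1) unfolding regular_two_graph_def by blast
    hence "T \<in> ?X" using card_3_subset_of_4[OF T(2) _ Q(2)] by simp
    with T(1) show "T \<in> {T \<in> ?X. T \<in> \<C>}" by (intro CollectI conjI)
  next
    fix T assume "T \<in> {T \<in> ?X. T \<in> \<C>}"
    thus "T \<in> {T \<in> \<C>. T \<subseteq> {p, q, r, s}}" by (intro CollectI conjI) auto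
  qed
  also have "card \<dots> = of_bool ({p, q, r} \<in> \<C>) + of_bool ({p, q, s} \<in> \<C>)
      + of_bool ({p, r, s} \<in> \<C>) + of_bool ({q, r, s} \<in> \<C>)"
    by (rule card_filter_4[OF distinct_3_subsets_of_4[OF Q(2)]])
  finally have count: "card {T \<in> \<C>. T \<subseteq> {p, q, r, s}} = of_bool ({p, q, r} \<in> \<C>)
      + of_bool ({p, q, s} \<in> \<C>) + of_bool ({p, r, s} \<in> \<C>) + of_bool ({q, r, s} \<in> \<C>)" .
  show ?thesis using even unfolding count by (rule even_count_4_parity)
qed

lemma card_set_mset_le_size: "card (set_mset M) \<le> size M"
  using size_mset_mono[OF mset_set_set_mset_msubset[of M]] by simp

lemma mset_set_set_mset_eq: "\<forall>x \<in># M. count M x = 1 \<Longrightarrow> mset_set (set_mset M) = M"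
  by (rule multiset_eqI) (metis count_mset_set(1,3) finite_set_mset count_eq_zero_iff)

lemma image_mset_eq_if_count_eq_1:
  assumes "inj_on f (set_mset M)" "f ` set_mset M = set_mset N"
    and "\<forall>x \<in># M. count M x = 1" "\<forall>y \<in># N. count N y = 1"
  shows "image_mset f M = N"
  using image_mset_mset_set[OF assms(1)] assms(2) mset_set_set_mset_eq[OF assms(3)]
    mset_set_set_mset_eq[OF assms(4)] by simp

lemma bij_betw_fun_upd_extend:
  assumes g: "bij_betw g (A - {a}) (B - {b})" and "a \<in> A" "b \<in> B"
  shows "bij_betw (g(a := b)) A B"
proof -
  have "bij_betw (g(a := b)) (A - {a}) (B - {b})"
    using g by (rule bij_betw_cong[THEN iffD1, rotated]) auto
  moreover have "bij_betw (g(a := b)) {a} {b}" by simp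
  ultimately have "bij_betw (g(a := b)) ((A - {a}) \<union> {a}) ((B - {b}) \<union> {b})"
    by (rule bij_betw_combine) auto
  thus ?thesis using assms(2,3) by (simp add: insert_absorb)
qed

lemma image_sym_diff:
  "inj_on f A \<Longrightarrow> X \<subseteq> A \<Longrightarrow> Y \<subseteq> A \<Longrightarrow> f ` sym_diff X Y = sym_diff (f ` X) (f ` Y)"
  using inj_on_image_set_diff[of f A X Y] inj_on_image_set_diff[of f A Y X] by (auto simp: image_Un)

lemma card_4_obtain:
  assumes "card L = 4" "i \<in> L"
  obtains a b c where "L = {i, a, b, c}" "distinct [i, a, b, c]"
proof -
  have "finite L" using assms(1) by (metis card.infinite zero_neq_numeral)
  hence "card (L - {i}) = 3" using assms by simp
  then obtain a b c where abc: "L - {i} = {a, b, c}" "distinct [a, b, c]"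
    by (auto simp: card_3_iff)
  hence "L = {i, a, b, c}" "i \<notin> {a, b, c}" using assms(2) by blast+
  thus ?thesis using abc that by simp
qed

text \<open>In the derived graph at \<open>\<infinity>\<close> of our designs, the fourth point \<open>c\<close> of a line
\<open>{\<infinity>, a, b, c}\<close> is the unique vertex with this property.\<close>
definition completes_edge :: "'a set \<Rightarrow> ('a \<Rightarrow> 'a \<Rightarrow> bool) \<Rightarrow> 'a \<Rightarrow> 'a \<Rightarrow> 'a \<Rightarrow> bool" where
  "completes_edge V E a b z \<longleftrightarrow> z \<in> V \<and> z \<noteq> a \<and> z \<noteq> b \<and> E a z \<and> E b z \<and>
     (\<forall>w \<in> V - {a, b, z}. E w z \<longleftrightarrow> (E w a \<longleftrightarrow> E w b))"

lemma completes_edge_unique: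
  assumes sym: "\<And>x y. E x y \<longleftrightarrow> E y x"
    and no_twins: "\<And>z z'. z \<in> V \<Longrightarrow> z' \<in> V \<Longrightarrow> z \<noteq> z' \<Longrightarrow> E z z' \<Longrightarrow> \<exists>w \<in> V - {z, z'}. E w z \<noteq> E w z'"
    and z: "completes_edge V E a b z" and z': "completes_edge V E a b z'"
  shows "z = z'"
proof (rule ccontr)
  assume "z \<noteq> z'"
  have "E z z'" using z z' \<open>z \<noteq> z'\<close> sym unfolding completes_edge_def by blast
  moreover have "E w z \<longleftrightarrow> E w z'" if "w \<in> V - {z, z'}" for w
    using z z' that sym unfolding completes_edge_def by (cases "w = a \<or> w = b") auto
  ultimately show False
    using no_twins[of z z'] z z' \<open>z \<noteq> z'\<close> unfolding completes_edge_def by blast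
qed

lemma completes_edge_iso:
  assumes "bij_betw g V W" "\<forall>x \<in> V. \<forall>y \<in> V. E x y \<longleftrightarrow> F (g x) (g y)" "a \<in> V" "b \<in> V"
    and "completes_edge V E a b z"
  shows "completes_edge W F (g a) (g b) (g z)"
proof -
  have inj: "inj_on g V" and im: "g ` V = W" using assms(1) unfolding bij_betw_def by auto
  note adj = assms(2) and ab = assms(3,4)
  have z: "z \<in> V" "z \<noteq> a" "z \<noteq> b" "E a z" "E b z" "\<forall>w \<in> V - {a, b, z}. E w z \<longleftrightarrow> (E w a \<longleftrightarrow> E w b)"
    using assms(5) unfolding completes_edge_def by auto
  have "g z \<in> W" "g z \<noteq> g a" "g z \<noteq> g b" "F (g a) (g z)" "F (g b) (g z)"
    using z ab im adj inj_on_eq_iff[OF inj] by auto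
  moreover have "F w' (g z) \<longleftrightarrow> (F w' (g a) \<longleftrightarrow> F w' (g b))" if w': "w' \<in> W - {g a, g b, g z}" for w'
  proof -
    obtain w where w: "w \<in> V" "w' = g w" using w' im by blast
    with w' have "w \<in> V - {a, b, z}" by auto
    thus ?thesis using z(1,6) ab adj w by auto
  qed
  ultimately show ?thesis unfolding completes_edge_def by blast
qed

lemma derived_adj_commute: "derived_adj \<Omega> \<B> i a b \<longleftrightarrow> derived_adj \<Omega> \<B> i b a"
  unfolding derived_adj_def by (simp add: insert_commute)

locale triangle_design =
  fixes \<Omega> :: "'a set" and \<B> :: "'a set multiset" and n lam :: nat
  assumes design: "design_2_4 \<Omega> \<B> n lam"
    and simple: "supersimple \<B>"
    and triangle: "prop_triangle \<B>"
begin

abbreviation \<C> :: "'a set set" where "\<C> \<equiv> collinear_triples \<Omega> \<B>"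

lemma line_subset: "L \<in># \<B> \<Longrightarrow> L \<subseteq> \<Omega>"
  using design unfolding design_2_4_def by blast

lemma card_line: "L \<in># \<B> \<Longrightarrow> card L = 4"
  using design unfolding design_2_4_def by blast

lemma finite_line: "L \<in># \<B> \<Longrightarrow> finite L"
  using card_line by (metis card.infinite zero_neq_numeral)

lemma collinearI: "L \<in># \<B> \<Longrightarrow> T \<subseteq> L \<Longrightarrow> card T = 3 \<Longrightarrow> T \<in> \<C>"
  using line_subset unfolding collinear_triples_def by blast

lemma collinearE:
  assumes "T \<in> \<C>"
  obtains L where "L \<in># \<B>" "T \<subseteq> L"
  using assms unfolding collinear_triples_def by blast

lemma triple_determines_line:
  assumes "L \<in># \<B>" "L' \<in># \<B>" "{x, y, z} \<subseteq> L \<inter> L'" "distinct [x, y, z]"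
  shows "L = L'"
proof (rule ccontr)
  assume "L \<noteq> L'"
  hence "card (L \<inter> L') \<le> 2" using simple assms(1,2) unfolding supersimple_def by blast
  moreover have "card {x, y, z} \<le> card (L \<inter> L')"
    using assms(3) finite_line[OF assms(1)] by (intro card_mono) auto
  ultimately show False using assms(4) by simp
qed

lemma line_fourth_point:
  assumes "L \<in># \<B>" "{x, y, z} \<subseteq> L" "distinct [x, y, z]"
  obtains t where "L = {x, y, z, t}" "distinct [x, y, z, t]"
proof -
  have "card (L - {x, y, z}) = 1"
    using assms card_line[OF assms(1)] finite_line[OF assms(1)] by (simp add: card_Diff_subset)
  then obtain t where t: "L - {x, y, z} = {t}" by (meson card_1_singletonE)
  hence "L = {x, y, z, t}" "t \<notin> {x, y, z}" using assms(2) by blast+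
  thus ?thesis using assms(3) by (intro that) auto
qed

lemma derived_edge_line:
  assumes "derived_adj \<Omega> \<B> i a b"
  obtains t where "{i, a, b, t} \<in># \<B>" "distinct [i, a, b, t]"
proof -
  have T: "{i, a, b} \<in> \<C>" using assms unfolding derived_adj_def .
  hence "distinct [i, a, b]"
    unfolding collinear_triples_def by (auto simp: card_insert_if split: if_splits)
  moreover obtain L where "L \<in># \<B>" "{i, a, b} \<subseteq> L" using T by (rule collinearE)
  ultimately show ?thesis using that by (metis line_fourth_point)
qed

lemma sym_diff_line:
  "L \<in># \<B> \<Longrightarrow> L' \<in># \<B> \<Longrightarrow> card (L \<inter> L') = 2 \<Longrightarrow> sym_diff L L' \<in># \<B>"
  using triangle unfolding prop_triangle_def by blast

lemma collinear_across_line: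
  assumes L: "{x, y, u, v} \<in># \<B>" "distinct [x, y, u, v]"
    and w: "w \<notin> {x, y, u, v}" and wxy: "{w, x, y} \<in> \<C>"
  shows "{w, u, v} \<in> \<C>"
proof -
  obtain L' where L': "L' \<in># \<B>" "{w, x, y} \<subseteq> L'" using wxy by (rule collinearE)
  have "{x, y, u, v} \<noteq> L'" using L' w by blast
  hence "u \<notin> L'" "v \<notin> L'"
    using triple_determines_line[OF L(1) L'(1), of x y] L L'(2) by auto
  hence "{x, y, u, v} \<inter> L' = {x, y}" using L'(2) by blast
  hence "card ({x, y, u, v} \<inter> L') = 2" using L(2) by simp
  hence "sym_diff {x, y, u, v} L' \<in># \<B>"
    using L(1) L'(1) by (intro sym_diff_line)
  moreover have "{w, u, v} \<subseteq> sym_diff {x, y, u, v} L'"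
    using \<open>u \<notin> L'\<close> \<open>v \<notin> L'\<close> L'(2) w by blast
  ultimately show ?thesis using L(2) w by (intro collinearI) auto
qed

end

locale two_graph_design = triangle_design +
  assumes two_graph: "regular_two_graph \<Omega> (collinear_triples \<Omega> \<B>)"
    and large: "2 * lam + 2 < n"
begin

lemma exists_noncollinear_point:
  assumes "i \<in> \<Omega>" "t \<in> \<Omega>" "t \<noteq> i"
  shows "\<exists>w \<in> \<Omega> - {i, t}. {i, t, w} \<notin> \<C>"
proof (rule ccontr)
  assume "\<not> ?thesis"
  hence full: "\<And>w. w \<in> \<Omega> - {i, t} \<Longrightarrow> {i, t, w} \<in> \<C>" by blast
  let ?F = "filter_mset (\<lambda>B. {i, t} \<subseteq> B) \<B>"
  let ?U = "\<Union>L \<in> set_mset ?F. L - {i, t}"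
  have \<Omega>: "finite \<Omega>" "card \<Omega> = n" using design unfolding design_2_4_def by auto
  have "{i, t} \<subseteq> \<Omega>" "card {i, t} = 2" using assms by auto
  hence "size ?F = lam" using design unfolding design_2_4_def by blast
  have "\<Omega> - {i, t} \<subseteq> ?U"
  proof
    fix w assume w: "w \<in> \<Omega> - {i, t}"
    obtain L where L: "L \<in># \<B>" "{i, t, w} \<subseteq> L" using full[OF w] by (rule collinearE)
    hence "L \<in> set_mset ?F" by simp
    thus "w \<in> ?U" using w L(2) by blast
  qed
  moreover have "finite ?U" using line_subset \<Omega>(1) by (intro finite_subset[of ?U \<Omega>]) auto
  ultimately have "card (\<Omega> - {i, t}) \<le> card ?U" by (rule card_mono[rotated])
  also have "\<dots> \<le> (\<Sum>L \<in> set_mset ?F. card (L - {i, t}))" by (rule card_UN_le) simp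
  also have "\<dots> = (\<Sum>L \<in> set_mset ?F. 2)"
    using card_line finite_line \<open>card {i, t} = 2\<close> by (intro sum.cong) (simp_all add: card_Diff_subset)
  also have "\<dots> \<le> 2 * lam" using card_set_mset_le_size[of ?F] \<open>size ?F = lam\<close> by simp
  finally show False using large \<Omega> \<open>{i, t} \<subseteq> \<Omega>\<close> \<open>card {i, t} = 2\<close>
    by (simp add: card_Diff_subset)
qed

lemma line_completes_edge:
  assumes L: "{i, a, b, c} \<in># \<B>" "distinct [i, a, b, c]"
  shows "completes_edge (\<Omega> - {i}) (derived_adj \<Omega> \<B> i) a b c"
proof -
  have in\<Omega>: "{i, a, b, c} \<subseteq> \<Omega>" using line_subset[OF L(1)] .
  have "{i, a, b} \<in> \<C>" "{i, a, c} \<in> \<C>" "{i, b, c} \<in> \<C>"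
    using L by (auto intro: collinearI)
  moreover have "{i, w, c} \<in> \<C> \<longleftrightarrow> ({i, w, a} \<in> \<C> \<longleftrightarrow> {i, w, b} \<in> \<C>)"
    if w: "w \<in> \<Omega> - {i} - {a, b, c}" for w
  proof -
    have "{i, c, a, b} \<in># \<B>" "{a, b, i, c} \<in># \<B>" using L(1) by (simp_all add: insert_commute)
    hence "{w, i, c} \<in> \<C> \<longleftrightarrow> {w, a, b} \<in> \<C>"
      using collinear_across_line[of i c a b w] collinear_across_line[of a b i c w] L(2) w by auto
    moreover have "({i, w, a} \<in> \<C> \<longleftrightarrow> {i, w, b} \<in> \<C>) \<longleftrightarrow> ({i, a, b} \<in> \<C> \<longleftrightarrow> {w, a, b} \<in> \<C>)"
      using in\<Omega> w L(2) by (intro regular_two_graph_parity[OF two_graph]) auto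
    moreover have "{w, i, c} = {i, w, c}" by auto
    ultimately show ?thesis using \<open>{i, a, b} \<in> \<C>\<close> by simp
  qed
  moreover have "c \<in> \<Omega> - {i}" "c \<noteq> a" "c \<noteq> b" using in\<Omega> L(2) by auto
  ultimately show ?thesis unfolding completes_edge_def derived_adj_def by blast
qed

lemma derived_graph_no_adjacent_twins:
  assumes "z \<in> \<Omega> - {i}" "z' \<in> \<Omega> - {i}" "derived_adj \<Omega> \<B> i z z'"
  shows "\<exists>w \<in> \<Omega> - {i} - {z, z'}. derived_adj \<Omega> \<B> i w z \<noteq> derived_adj \<Omega> \<B> i w z'"
proof -
  obtain t where line: "{i, z, z', t} \<in># \<B>" "distinct [i, z, z', t]"
    using assms(3) by (rule derived_edge_line)
  have t: "completes_edge (\<Omega> - {i}) (derived_adj \<Omega> \<B> i) z z' t"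
    using line by (rule line_completes_edge)
  have "i \<in> \<Omega>" "t \<in> \<Omega>" using line_subset[OF line(1)] by auto
  then obtain w where w: "w \<in> \<Omega> - {i, t}" "{i, t, w} \<notin> \<C>"
    using exists_noncollinear_point line(2) by auto
  hence "\<not> derived_adj \<Omega> \<B> i w t" unfolding derived_adj_def by (simp add: insert_commute)
  moreover have "derived_adj \<Omega> \<B> i w t" if "w = z \<or> w = z'"
    using t that derived_adj_commute unfolding completes_edge_def by metis
  ultimately show ?thesis using t w unfolding completes_edge_def by auto
qed

lemma completes_edge_iff_line:
  assumes "{i, a, b, c} \<in># \<B>" "distinct [i, a, b, c]"
  shows "completes_edge (\<Omega> - {i}) (derived_adj \<Omega> \<B> i) a b z \<longleftrightarrow> z = c"
  using completes_edge_unique[OF derived_adj_commute derived_graph_no_adjacent_twins]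
    line_completes_edge[OF assms] by blast

lemma line_contains_derived_edge:
  assumes L: "L \<in># \<B>" and i: "i \<in> \<Omega>" "i \<notin> L"
  obtains x y where "x \<in> L" "y \<in> L" "derived_adj \<Omega> \<B> i x y"
proof -
  have "L \<noteq> {}" using card_line[OF L] by auto
  then obtain a where "a \<in> L" by blast
  then obtain b c d where L_eq: "L = {a, b, c, d}" and abcd: "distinct [a, b, c, d]"
    using card_line[OF L] by (elim card_4_obtain)
  have "{a, b, c} \<in> \<C>" using L L_eq abcd by (intro collinearI) auto
  moreover have "({i, a, b} \<in> \<C> \<longleftrightarrow> {i, a, c} \<in> \<C>) \<longleftrightarrow> ({i, b, c} \<in> \<C> \<longleftrightarrow> {a, b, c} \<in> \<C>)"
    using line_subset[OF L] L_eq abcd i by (intro regular_two_graph_parity[OF two_graph]) auto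
  ultimately have "{i, a, b} \<in> \<C> \<or> {i, a, c} \<in> \<C> \<or> {i, b, c} \<in> \<C>" by blast
  thus ?thesis using that L_eq unfolding derived_adj_def by blast
qed

end

locale derived_iso =
  D1: two_graph_design \<Omega>1 \<B>1 n1 lam1 + D2: two_graph_design \<Omega>2 \<B>2 n2 lam2
  for \<Omega>1 :: "'a set" and \<B>1 n1 lam1 and \<Omega>2 :: "'b set" and \<B>2 n2 lam2 +
  fixes i1 :: 'a and i2 :: 'b and g :: "'a \<Rightarrow> 'b"
  assumes base: "i1 \<in> \<Omega>1" "i2 \<in> \<Omega>2"
    and bij: "bij_betw g (\<Omega>1 - {i1}) (\<Omega>2 - {i2})"
    and adj: "\<forall>x \<in> \<Omega>1 - {i1}. \<forall>y \<in> \<Omega>1 - {i1}. derived_adj \<Omega>1 \<B>1 i1 x y \<longleftrightarrow> derived_adj \<Omega>2 \<B>2 i2 (g x) (g y)"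
begin

abbreviation f :: "'a \<Rightarrow> 'b" where "f \<equiv> g(i1 := i2)"

lemma bij_f: "bij_betw f \<Omega>1 \<Omega>2"
  using bij base by (rule bij_betw_fun_upd_extend)

lemma image_line_through_base:
  assumes L: "L \<in># \<B>1" "i1 \<in> L"
  shows "f ` L \<in># \<B>2"
proof -
  obtain a b c where L_eq: "L = {i1, a, b, c}" and abc: "distinct [i1, a, b, c]"
    using D1.card_line[OF L(1)] L(2) by (rule card_4_obtain)
  have ab: "a \<in> \<Omega>1 - {i1}" "b \<in> \<Omega>1 - {i1}" using D1.line_subset[OF L(1)] L_eq abc by auto
  have line1: "{i1, a, b, c} \<in># \<B>1" using L(1) L_eq by simp
  have "derived_adj \<Omega>1 \<B>1 i1 a b" unfolding derived_adj_def using line1 abc by (intro D1.collinearI) auto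
  hence "derived_adj \<Omega>2 \<B>2 i2 (g a) (g b)" using adj ab by blast
  then obtain t where line2: "{i2, g a, g b, t} \<in># \<B>2" "distinct [i2, g a, g b, t]"
    by (rule D2.derived_edge_line)
  have "completes_edge (\<Omega>1 - {i1}) (derived_adj \<Omega>1 \<B>1 i1) a b c"
    using D1.completes_edge_iff_line[OF line1 abc] by simp
  hence "completes_edge (\<Omega>2 - {i2}) (derived_adj \<Omega>2 \<B>2 i2) (g a) (g b) (g c)"
    by (rule completes_edge_iso[OF bij adj ab])
  hence "g c = t" using D2.completes_edge_iff_line[OF line2] by simp
  moreover have "f ` L = {i2, g a, g b, g c}" using L_eq abc by auto
  ultimately show ?thesis using line2(1) by simp
qed

lemma image_line:
  assumes L: "L \<in># \<B>1"
  shows "f ` L \<in># \<B>2"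
proof (cases "i1 \<in> L")
  case True
  with L show ?thesis by (rule image_line_through_base)
next
  case False
  obtain x y where xy: "x \<in> L" "y \<in> L" "derived_adj \<Omega>1 \<B>1 i1 x y"
    using L base(1) False by (rule D1.line_contains_derived_edge)
  obtain c where M: "{i1, x, y, c} \<in># \<B>1" "distinct [i1, x, y, c]"
    using xy(3) by (rule D1.derived_edge_line)
  define M where "M = {i1, x, y, c}"
  define N where "N = sym_diff L M"
  have "c \<notin> L" using D1.triple_determines_line[OF L M(1), of x y c] False M(2) xy by auto
  hence "L \<inter> M = {x, y}" using False xy unfolding M_def by blast
  hence "card (L \<inter> M) = 2" using M(2) by simp
  hence N: "N \<in># \<B>1" using L M(1) unfolding N_def M_def by (rule D1.sym_diff_line[rotated 2])
  have "M \<inter> N = {i1, c}" "sym_diff M N = L"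
    using \<open>L \<inter> M = {x, y}\<close> \<open>c \<notin> L\<close> False unfolding N_def M_def by blast+
  have inj: "inj_on f \<Omega>1" using bij_f by (rule bij_betw_imp_inj_on)
  have MN: "M \<subseteq> \<Omega>1" "N \<subseteq> \<Omega>1" using D1.line_subset M(1) N unfolding M_def by auto
  have "card (f ` M \<inter> f ` N) = card (M \<inter> N)"
    unfolding inj_on_image_Int[OF inj MN, symmetric] using MN by (intro card_image inj_on_subset[OF inj]) auto
  also have "\<dots> = 2" using \<open>M \<inter> N = {i1, c}\<close> M(2) by simp
  finally have "card (f ` M \<inter> f ` N) = 2" .
  moreover have "f ` M \<in># \<B>2" using M(1) unfolding M_def by (rule image_line_through_base) simp
  moreover have "f ` N \<in># \<B>2" using N by (rule image_line_through_base) (use False in \<open>simp add: N_def M_def\<close>)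
  ultimately have "sym_diff (f ` M) (f ` N) \<in># \<B>2" by (intro D2.sym_diff_line)
  moreover have "sym_diff (f ` M) (f ` N) = f ` (sym_diff M N)"
    by (rule image_sym_diff[OF inj MN, symmetric])
  ultimately show ?thesis using \<open>sym_diff M N = L\<close> by simp
qed

lemma derived_iso_inverse:
  "derived_iso \<Omega>2 \<B>2 n2 lam2 \<Omega>1 \<B>1 n1 lam1 i2 i1 (the_inv_into (\<Omega>1 - {i1}) g)"
proof -
  let ?h = "the_inv_into (\<Omega>1 - {i1}) g"
  have h: "bij_betw ?h (\<Omega>2 - {i2}) (\<Omega>1 - {i1})" by (rule bij_betw_the_inv_into[OF bij])
  have "derived_adj \<Omega>2 \<B>2 i2 x y \<longleftrightarrow> derived_adj \<Omega>1 \<B>1 i1 (?h x) (?h y)"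
    if "x \<in> \<Omega>2 - {i2}" "y \<in> \<Omega>2 - {i2}" for x y
    using adj bij_betwE[OF h] that f_the_inv_into_f_bij_betw[OF bij] by metis
  thus ?thesis using h base by unfold_locales auto
qed

lemma image_mset_lines: "image_mset (image f) \<B>1 = \<B>2"
proof -
  interpret inv: derived_iso \<Omega>2 \<B>2 n2 lam2 \<Omega>1 \<B>1 n1 lam1 i2 i1 "the_inv_into (\<Omega>1 - {i1}) g"
    by (rule derived_iso_inverse)
  have f_inv: "f (inv.f y) = y" if "y \<in> \<Omega>2" for y
  proof (cases "y = i2")
    case False
    hence "the_inv_into (\<Omega>1 - {i1}) g y \<in> \<Omega>1 - {i1}"
      using that bij_betwE[OF inv.bij] by blast
    thus ?thesis using False that f_the_inv_into_f_bij_betw[OF bij] by auto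
  qed simp
  have "image f ` set_mset \<B>1 = set_mset \<B>2"
  proof
    show "image f ` set_mset \<B>1 \<subseteq> set_mset \<B>2" using image_line by auto
    show "set_mset \<B>2 \<subseteq> image f ` set_mset \<B>1"
    proof
      fix L assume L: "L \<in># \<B>2"
      have "f ` inv.f ` L = (\<lambda>y. f (inv.f y)) ` L" by (rule image_image)
      also have "\<dots> = (\<lambda>y. y) ` L"
        using D2.line_subset[OF L] f_inv by (intro image_cong) (auto simp del: fun_upd_apply)
      finally have "L = f ` inv.f ` L" by (simp only: image_ident)
      thus "L \<in> image f ` set_mset \<B>1" by (rule image_eqI) (rule inv.image_line[OF L])
    qed
  qed
  moreover have "inj_on (image f) (set_mset \<B>1)"
    using D1.line_subset by (intro inj_on_subset[OF inj_on_image_Pow[OF bij_betw_imp_inj_on[OF bij_f]]]) blast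
  ultimately show ?thesis
    using D1.simple D2.simple unfolding supersimple_def by (intro image_mset_eq_if_count_eq_1) blast+
qed

end

theorem lemma6p5:
  fixes \<Omega>1 :: "'a set" and \<B>1 :: "'a set multiset" and n1 lam1 :: nat and i1 :: 'a
    and \<Omega>2 :: "'b set" and \<B>2 :: "'b set multiset" and n2 lam2 :: nat and i2 :: 'b
  assumes D1: "design_2_4 \<Omega>1 \<B>1 n1 lam1" "supersimple \<B>1" "prop_triangle \<B>1"
      "regular_two_graph \<Omega>1 (collinear_triples \<Omega>1 \<B>1)" "n1 > 2 * lam1 + 2"
    and D2: "design_2_4 \<Omega>2 \<B>2 n2 lam2" "supersimple \<B>2" "prop_triangle \<B>2"
      "regular_two_graph \<Omega>2 (collinear_triples \<Omega>2 \<B>2)" "n2 > 2 * lam2 + 2"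
    and inf: "i1 \<in> \<Omega>1" "i2 \<in> \<Omega>2"
    and iso: "derived_graphs_iso \<Omega>1 \<B>1 i1 \<Omega>2 \<B>2 i2"
  shows "designs_iso \<Omega>1 \<B>1 \<Omega>2 \<B>2"
proof -
  obtain g where "bij_betw g (\<Omega>1 - {i1}) (\<Omega>2 - {i2})"
    "\<forall>a \<in> \<Omega>1 - {i1}. \<forall>b \<in> \<Omega>1 - {i1}. derived_adj \<Omega>1 \<B>1 i1 a b \<longleftrightarrow> derived_adj \<Omega>2 \<B>2 i2 (g a) (g b)"
    using iso unfolding derived_graphs_iso_def graph_iso_def by blast
  then interpret derived_iso \<Omega>1 \<B>1 n1 lam1 \<Omega>2 \<B>2 n2 lam2 i1 i2 g
    using D1 D2 inf by unfold_locales auto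
  show ?thesis unfolding designs_iso_def using bij_f image_mset_lines by blast
qed

end
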